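(* For all $X,Y\in\mathbb{R}$ and all integers $p,q\geq1$, \begin{align*} \binom{p+q}{q}\mathcal{B}_{p}(X+Y)\mathcal{B}_{q}(Y) &=\sum_{j=0}^{p+q}\binom{p+q}{j}\binom{p+q-1-j}{q-1}\mathcal{B}_{p+q-j}(Y)\mathcal{B}_{j}(X)\\ &\quad+\sum_{h=0}^{q}\binom{p+q}{h}\binom{p+q-1-h}{p-1}(-1)^{h}\mathcal{B}_{p+q-h}(X+Y)\mathcal{B}_{h}(X). \end{align*}
   Context: $B_n(x)$ denotes the $n$th Bernoulli polynomial, defined by $\frac{te^{xt}}{e^t-1}=\sum_{n\ge0}B_n(x)\frac{t^n}{n!}$, and $\mathcal{B}_n(x)=B_n(x-[x])$ is the $n$th Bernoulli function, where $[x]$ is the largest integer $\le x$ (so $\mathcal{B}_0\equiv1$ and $\mathcal{B}_1(m)=-1/2$ for $m\in\mathbb{Z}$). Binomial coefficients with integer upper entry $n$ (possibly negative) and integer lower entry $k\ge0$ are $\binom{n}{k}=\frac{n(n-1)\cdots(n-k+1)}{k!}$; in particular $\binom{-1}{k}=(-1)^k$ and $\binom{n}{k}=0$ for $0\le n<k$. *)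

theory Defs
  imports "HOL-Analysis.Analysis" "HOL-Computational_Algebra.Formal_Power_Series"
begin

definition bernpoly :: "nat \<Rightarrow> real \<Rightarrow> real" where
  "bernpoly n x = fact n * fps_nth (fps_X * fps_exp x / (fps_exp 1 - 1)) n"

definition bernfun :: "nat \<Rightarrow> real \<Rightarrow> real" where
  "bernfun n x = bernpoly n (x - of_int \<lfloor>x\<rfloor>)"

definition ibinom :: "int \<Rightarrow> nat \<Rightarrow> real" where
  "ibinom n k = (of_int n :: real) gchoose k"

end

theory Submission
  imports Defs "HOL-Computational_Algebra.Polynomial_FPS"
begin

(*
  With E_w(a) = w t e^(w a t) / (e^(w t) - 1) (bernoulli_egf w a), the exponential
  generating function of w^m B_m(a), the relation x = a - c or x = a - c + 1 between
  the fractional parts a, c, x of X + Y, Y, X gives the elementary identity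
    (1 + z) E_z(c) E_1(a) = z E_1(x) E_(1+z)(c) + E_(-z)(x) E_(1+z)(a),
  since after clearing denominators both sides are the same sums of exponentials.
  Comparing coefficients of t^n = t^(p+q) gives an identity between polynomials in z
  whose left side is divisible by 1 + z. Dividing by 1 + z turns each (1 + z)^m into the
  binomial series of exponent m - 1 (for m = 0 this is (1 + z)^(-1)), and the coefficient
  of z^q is the theorem.
*)

lemma fps_exp_minus_one_nonzero:
  assumes "(w :: 'a :: field_char_0) \<noteq> 0"
  shows "fps_exp w - 1 \<noteq> 0"
proof
  assume "fps_exp w - 1 = 0"
  then have "fps_nth (fps_exp w - 1) 1 = 0" by simp
  with assms show False by simp
qed

lemma fps_exp_minus_one_dvd_X_mult: "fps_exp (1 :: 'a :: field_char_0) - 1 dvd fps_X * f"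
proof (cases "f = 0")
  case False
  have "subdegree (fps_exp (1 :: 'a) - 1) = 1"
    by (rule subdegreeI) auto
  with False show ?thesis
    by (subst fps_dvd_iff) (simp_all add: fps_exp_minus_one_nonzero)
qed simp

definition bernoulli_egf :: "real \<Rightarrow> real \<Rightarrow> real fps" where
  "bernoulli_egf w a = (fps_X * fps_exp a / (fps_exp 1 - 1)) oo (fps_const w * fps_X)"

lemma bernoulli_egf_nth: "fps_nth (bernoulli_egf w a) m = w ^ m * bernpoly m a / fact m"
  by (simp add: bernoulli_egf_def bernpoly_def)

lemma fps_exp_minus_one_times_bernoulli_egf:
  "(fps_exp w - 1) * bernoulli_egf w a = fps_const w * fps_X * fps_exp (w * a)"
proof -
  have "(fps_exp 1 - 1) * (fps_X * fps_exp a / (fps_exp 1 - 1)) = fps_X * fps_exp a"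
    by (rule dvd_mult_div_cancel) (rule fps_exp_minus_one_dvd_X_mult)
  then have "((fps_exp 1 - 1) * (fps_X * fps_exp a / (fps_exp 1 - 1))) oo (fps_const w * fps_X)
      = (fps_X * fps_exp a) oo (fps_const w * fps_X)"
    by simp
  then show ?thesis
    by (simp add: bernoulli_egf_def fps_compose_mult_distrib fps_compose_sub_distrib)
qed

lemma bernoulli_egf_uminus:
  assumes "w \<noteq> 0"
  shows "bernoulli_egf (- w) a = bernoulli_egf w (1 - a)"
proof -
  have "(fps_exp w - 1) * bernoulli_egf (- w) a
      = - fps_exp w * ((fps_exp (- w) - 1) * bernoulli_egf (- w) a)"
    by (simp add: algebra_simps mult.assoc[symmetric] flip: fps_exp_add_mult)
  also have "\<dots> = fps_exp w * (fps_const w * fps_X * fps_exp (- w * a))"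
    by (simp add: fps_exp_minus_one_times_bernoulli_egf flip: fps_const_neg)
  also have "\<dots> = fps_const w * fps_X * fps_exp (w * (1 - a))"
    by (simp add: right_diff_distrib flip: fps_exp_add_mult)
  also have "\<dots> = (fps_exp w - 1) * bernoulli_egf w (1 - a)"
    by (simp only: fps_exp_minus_one_times_bernoulli_egf)
  finally show ?thesis
    using fps_exp_minus_one_nonzero[OF assms] by simp
qed

lemma fps_exp_three_term_identity:
  fixes a c x z :: "'a :: field_char_0"
  assumes "x = a - c \<or> x = a - c + 1"
  shows "fps_exp a * fps_exp (z * c) * (fps_exp (1 + z) - 1) =
    fps_exp x * (fps_exp z - 1) * fps_exp ((1 + z) * c)
    + (fps_exp 1 - 1) * fps_exp (z * (1 - x)) * fps_exp ((1 + z) * a)"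
  using assms by (elim disjE; hypsubst) (simp_all add: algebra_simps flip: fps_exp_add_mult)

lemma bernoulli_egf_product_identity:
  fixes a c x z :: real
  assumes z: "z \<noteq> 0" "1 + z \<noteq> 0" and x: "x = a - c \<or> x = a - c + 1"
  shows "fps_const (1 + z) * (bernoulli_egf z c * bernoulli_egf 1 a) =
    fps_const z * (bernoulli_egf 1 x * bernoulli_egf (1 + z) c)
    + bernoulli_egf (- z) x * bernoulli_egf (1 + z) a"
proof -
  let ?E = bernoulli_egf
  define D where "D w = fps_exp w - (1 :: real fps)" for w
  have E: "D w * ?E w y = fps_const w * fps_X * fps_exp (w * y)" for w y
    unfolding D_def by (rule fps_exp_minus_one_times_bernoulli_egf)
  have "D 1 * D z * D (1 + z) * (fps_const (1 + z) * (?E z c * ?E 1 a))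
      = fps_const (1 + z) * (D z * ?E z c) * (D 1 * ?E 1 a) * D (1 + z)"
    by (simp only: ac_simps)
  also have "\<dots> = fps_const z * fps_const (1 + z) * fps_X ^ 2 *
      (fps_exp a * fps_exp (z * c) * D (1 + z))"
    unfolding E by (simp add: power2_eq_square ac_simps)
  also have "\<dots> = fps_const z * fps_const (1 + z) * fps_X ^ 2 *
      (fps_exp x * D z * fps_exp ((1 + z) * c) + D 1 * fps_exp (z * (1 - x)) * fps_exp ((1 + z) * a))"
    using fps_exp_three_term_identity[OF x] by (simp add: D_def)
  also have "\<dots> = fps_const z * (D 1 * ?E 1 x) * D z * (D (1 + z) * ?E (1 + z) c)
      + D 1 * (D z * ?E z (1 - x)) * (D (1 + z) * ?E (1 + z) a)"
    unfolding E by (simp only: power2_eq_square distrib_left mult_1_left fps_const_1_eq_1 mult_ac)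
  also have "\<dots> = D 1 * D z * D (1 + z) *
      (fps_const z * (?E 1 x * ?E (1 + z) c) + ?E (- z) x * ?E (1 + z) a)"
    by (simp add: bernoulli_egf_uminus[OF z(1)] algebra_simps)
  finally show ?thesis
    using z by (simp add: D_def fps_exp_minus_one_nonzero)
qed

lemma fact_times_bernoulli_egf_mult_nth:
  "fact n * fps_nth (bernoulli_egf u y * bernoulli_egf v y') n =
    (\<Sum>i\<le>n. real (n choose i) * u ^ i * v ^ (n - i) * bernpoly i y * bernpoly (n - i) y')"
  unfolding fps_mult_nth sum_distrib_left atLeast0AtMost
proof (rule sum.cong)
  fix i assume "i \<in> {..n}"
  then show "fact n * (fps_nth (bernoulli_egf u y) i * fps_nth (bernoulli_egf v y') (n - i)) =
      real (n choose i) * u ^ i * v ^ (n - i) * bernpoly i y * bernpoly (n - i) y'"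
    by (simp add: bernoulli_egf_nth binomial_fact)
qed simp

lemma bernpoly_convolution_identity:
  fixes a c x z :: real
  assumes "z \<noteq> 0" "1 + z \<noteq> 0" and "x = a - c \<or> x = a - c + 1"
  shows "(1 + z) * (\<Sum>k\<le>n. real (n choose k) * bernpoly k c * bernpoly (n - k) a * z ^ k) =
    z * (\<Sum>i\<le>n. real (n choose i) * bernpoly i x * bernpoly (n - i) c * (1 + z) ^ (n - i))
    + (\<Sum>i\<le>n. real (n choose i) * bernpoly i x * bernpoly (n - i) a * (- z) ^ i * (1 + z) ^ (n - i))"
proof -
  have "(1 + z) * (fact n * fps_nth (bernoulli_egf z c * bernoulli_egf 1 a) n) =
      z * (fact n * fps_nth (bernoulli_egf 1 x * bernoulli_egf (1 + z) c) n)
      + fact n * fps_nth (bernoulli_egf (- z) x * bernoulli_egf (1 + z) a) n"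
    using arg_cong[OF bernoulli_egf_product_identity[OF assms], of "\<lambda>f. fact n * fps_nth f n"]
    by (simp only: fps_mult_left_const_nth fps_add_nth) (simp add: algebra_simps)
  then show ?thesis
    unfolding fact_times_bernoulli_egf_mult_nth by (simp add: mult_ac)
qed

lemma poly_eqI_on_infinite:
  fixes p q :: "'a :: idom poly"
  assumes "infinite A" and "\<And>z. z \<in> A \<Longrightarrow> poly p z = poly q z"
  shows "p = q"
proof (rule ccontr)
  assume "p \<noteq> q"
  then have "finite {z. poly (p - q) z = 0}"
    by (intro poly_roots_finite) simp
  moreover have "A \<subseteq> {z. poly (p - q) z = 0}"
    using assms(2) by auto
  ultimately show False
    using assms(1) finite_subset by blast
qed

lemma fps_identity_of_pointwise_identity:
  fixes \<alpha> \<beta> \<gamma> :: "nat \<Rightarrow> 'a :: field_char_0"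
  assumes "\<And>z. z \<noteq> 0 \<Longrightarrow> 1 + z \<noteq> 0 \<Longrightarrow>
    (1 + z) * (\<Sum>k\<le>n. \<alpha> k * z ^ k) =
    z * (\<Sum>i\<le>n. \<beta> i * (1 + z) ^ (n - i)) + (\<Sum>i\<le>n. \<gamma> i * (- z) ^ i * (1 + z) ^ (n - i))"
  shows "(1 + fps_X) * (\<Sum>k\<le>n. fps_const (\<alpha> k) * fps_X ^ k) =
    fps_X * (\<Sum>i\<le>n. fps_const (\<beta> i) * (1 + fps_X) ^ (n - i))
    + (\<Sum>i\<le>n. fps_const (\<gamma> i) * (- fps_X) ^ i * (1 + fps_X) ^ (n - i))"
proof -
  have "[:1, 1:] * (\<Sum>k\<le>n. monom (\<alpha> k) k) =
      [:0, 1:] * (\<Sum>i\<le>n. smult (\<beta> i) ([:1, 1:] ^ (n - i)))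
      + (\<Sum>i\<le>n. smult (\<gamma> i) ([:0, -1:] ^ i * [:1, 1:] ^ (n - i)))"
  proof (rule poly_eqI_on_infinite)
    show "infinite (- {0, -1 :: 'a})"
      by (simp add: Diff_infinite_finite Compl_eq_Diff_UNIV infinite_UNIV_char_0)
  next
    fix z :: 'a assume "z \<in> - {0, -1}"
    then have "z \<noteq> 0" "1 + z \<noteq> 0"
      by (auto simp: add_eq_0_iff)
    from assms[OF this] show "poly ([:1, 1:] * (\<Sum>k\<le>n. monom (\<alpha> k) k)) z =
        poly ([:0, 1:] * (\<Sum>i\<le>n. smult (\<beta> i) ([:1, 1:] ^ (n - i)))
          + (\<Sum>i\<le>n. smult (\<gamma> i) ([:0, -1:] ^ i * [:1, 1:] ^ (n - i)))) z"
      by (simp add: poly_sum poly_monom mult_ac del: mult_pCons_left)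
  qed
  then have "fps_of_poly ([:1, 1:] * (\<Sum>k\<le>n. monom (\<alpha> k) k)) =
      fps_of_poly ([:0, 1:] * (\<Sum>i\<le>n. smult (\<beta> i) ([:1, 1:] ^ (n - i)))
      + (\<Sum>i\<le>n. smult (\<gamma> i) ([:0, -1:] ^ i * [:1, 1:] ^ (n - i))))"
    by (rule arg_cong)
  then show ?thesis
    by (simp add: fps_of_poly_mult fps_of_poly_add fps_of_poly_sum fps_of_poly_smult
        fps_of_poly_monom fps_of_poly_power fps_of_poly_pCons mult_ac
        del: mult_pCons_left flip: fps_const_neg)
qed

lemma one_plus_fps_X_power_eq:
  "(1 + fps_X :: 'a :: field_char_0 fps) ^ m = (1 + fps_X) * fps_binomial (of_nat m - 1)"
proof -
  have "(1 + fps_X :: 'a fps) ^ m = fps_binomial (1 + (of_nat m - 1))"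
    by (simp add: fps_binomial_of_nat)
  then show ?thesis
    by (simp only: fps_binomial_add_mult fps_binomial_1)
qed

lemma coeff_of_one_plus_X_identity:
  fixes \<alpha> \<beta> \<gamma> :: "nat \<Rightarrow> 'a :: field_char_0"
  assumes identity: "(1 + fps_X) * (\<Sum>k\<le>n. fps_const (\<alpha> k) * fps_X ^ k) =
    fps_X * (\<Sum>i\<le>n. fps_const (\<beta> i) * (1 + fps_X) ^ (n - i))
    + (\<Sum>i\<le>n. fps_const (\<gamma> i) * (- fps_X) ^ i * (1 + fps_X) ^ (n - i))"
    and "1 \<le> q" "q \<le> n"
  shows "\<alpha> q = (\<Sum>i\<le>n. \<beta> i * ((of_nat (n - i) - 1) gchoose (q - 1)))
    + (\<Sum>i\<le>q. \<gamma> i * (- 1) ^ i * ((of_nat (n - i) - 1) gchoose (q - i)))"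
proof -
  define F where "F = fps_X * (\<Sum>i\<le>n. fps_const (\<beta> i) * fps_binomial (of_nat (n - i) - 1))
    + (\<Sum>i\<le>n. fps_const (\<gamma> i * (- 1) ^ i) * (fps_X ^ i * fps_binomial (of_nat (n - i) - 1)))"
  have "- fps_X = fps_const (- 1) * (fps_X :: 'a fps)"
    by (simp flip: fps_const_neg)
  then have neg: "(- fps_X) ^ i = fps_const ((- 1) ^ i) * (fps_X ^ i :: 'a fps)" for i
    by (simp only: power_mult_distrib fps_const_power)
  have "(1 + fps_X) * (\<Sum>k\<le>n. fps_const (\<alpha> k) * fps_X ^ k) = (1 + fps_X) * F"
    unfolding identity one_plus_fps_X_power_eq F_def neg
    by (simp only: distrib_left sum_distrib_left fps_const_mult[symmetric] mult_ac)
  moreover have "1 + fps_X \<noteq> (0 :: 'a fps)"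
    by (simp add: fps_eq_iff) (rule exI[of _ 0], simp)
  ultimately have quotient: "(\<Sum>k\<le>n. fps_const (\<alpha> k) * fps_X ^ k) = F"
    by simp
  have "\<alpha> q = fps_nth F q"
    using \<open>q \<le> n\<close> by (simp add: fps_sum_nth mult_delta_right flip: quotient)
  also have "\<dots> = (\<Sum>i\<le>n. \<beta> i * ((of_nat (n - i) - 1) gchoose (q - 1)))
      + (\<Sum>i\<le>n. \<gamma> i * (- 1) ^ i * (if q < i then 0 else (of_nat (n - i) - 1) gchoose (q - i)))"
    using \<open>1 \<le> q\<close> by (simp add: F_def fps_sum_nth fps_X_power_mult_nth cong: if_cong)
  also have "(\<Sum>i\<le>n. \<gamma> i * (- 1) ^ i * (if q < i then 0 else (of_nat (n - i) - 1) gchoose (q - i)))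
      = (\<Sum>i\<le>q. \<gamma> i * (- 1) ^ i * ((of_nat (n - i) - 1) gchoose (q - i)))"
    using \<open>q \<le> n\<close> by (intro sum.mono_neutral_cong_right) auto
  finally show ?thesis .
qed

lemma ibinom_of_nat_diff:
  assumes "j \<le> m"
  shows "ibinom (int m - 1 - int j) k = (real (m - j) - 1) gchoose k"
proof -
  have "real_of_int (int m - 1 - int j) = real (m - j) - 1"
    using assms by (simp add: of_nat_diff)
  then show ?thesis
    unfolding ibinom_def by (rule arg_cong)
qed

lemma ibinom_complement:
  assumes "p \<ge> 1" "h \<le> q"
  shows "ibinom (int p + int q - 1 - int h) (p - 1) = (real (p + q - h) - 1) gchoose (q - h)"
proof -
  have "h \<le> p + q" and pred: "real (p + q - h) - 1 = real (p + q - h - 1)"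
    using assms by (simp_all add: of_nat_diff)
  then have "ibinom (int p + int q - 1 - int h) (p - 1) = real (p + q - h - 1) gchoose (p - 1)"
    using ibinom_of_nat_diff[of h "p + q" "p - 1"] by simp
  also have "\<dots> = real (p + q - h - 1) gchoose (q - h)"
    using gbinomial_of_nat_symmetric[of "p - 1" "p + q - h - 1", where 'a = real] assms by simp
  finally show ?thesis
    unfolding pred .
qed

lemma bernpoly_product_identity:
  fixes a c x :: real and p q :: nat
  assumes "p \<ge> 1" "q \<ge> 1" and x: "x = a - c \<or> x = a - c + 1"
  shows "real ((p + q) choose q) * bernpoly p a * bernpoly q c =
    (\<Sum>j = 0..p + q. real ((p + q) choose j) * ibinom (int p + int q - 1 - int j) (q - 1)
        * bernpoly (p + q - j) c * bernpoly j x)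
  + (\<Sum>h = 0..q. real ((p + q) choose h) * ibinom (int p + int q - 1 - int h) (p - 1)
        * (-1) ^ h * bernpoly (p + q - h) a * bernpoly h x)"
proof -
  define n where "n = p + q"
  have "(1 + fps_X) * (\<Sum>k\<le>n. fps_const (real (n choose k) * bernpoly k c * bernpoly (n - k) a)
        * fps_X ^ k) =
      fps_X * (\<Sum>i\<le>n. fps_const (real (n choose i) * bernpoly i x * bernpoly (n - i) c)
        * (1 + fps_X) ^ (n - i))
      + (\<Sum>i\<le>n. fps_const (real (n choose i) * bernpoly i x * bernpoly (n - i) a)
        * (- fps_X) ^ i * (1 + fps_X) ^ (n - i))"
    by (rule fps_identity_of_pointwise_identity) (rule bernpoly_convolution_identity[OF _ _ x])
  from coeff_of_one_plus_X_identity[OF this \<open>q \<ge> 1\<close>]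
  have "real (n choose q) * bernpoly q c * bernpoly p a =
      (\<Sum>i\<le>n. real (n choose i) * bernpoly i x * bernpoly (n - i) c
        * ((real (n - i) - 1) gchoose (q - 1)))
      + (\<Sum>i\<le>q. real (n choose i) * bernpoly i x * bernpoly (n - i) a * (- 1) ^ i
        * ((real (n - i) - 1) gchoose (q - i)))"
    by (simp add: n_def)
  moreover have "(\<Sum>j = 0..p + q. real ((p + q) choose j) * ibinom (int p + int q - 1 - int j) (q - 1)
        * bernpoly (p + q - j) c * bernpoly j x)
      = (\<Sum>i\<le>n. real (n choose i) * bernpoly i x * bernpoly (n - i) c
        * ((real (n - i) - 1) gchoose (q - 1)))"
    unfolding atLeast0AtMost n_def
    by (intro sum.cong refl) (simp add: ibinom_of_nat_diff[where m = "p + q", simplified])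
  moreover have "(\<Sum>h = 0..q. real ((p + q) choose h) * ibinom (int p + int q - 1 - int h) (p - 1)
        * (-1) ^ h * bernpoly (p + q - h) a * bernpoly h x)
      = (\<Sum>i\<le>q. real (n choose i) * bernpoly i x * bernpoly (n - i) a * (- 1) ^ i
        * ((real (n - i) - 1) gchoose (q - i)))"
    unfolding atLeast0AtMost n_def
    by (intro sum.cong refl) (subst ibinom_complement[OF \<open>p \<ge> 1\<close>]; simp)
  ultimately show ?thesis
    by (simp add: n_def binomial_symmetric[of q "p + q"] mult_ac)
qed

theorem theorem3:
  fixes X Y :: real and p q :: nat
  assumes "p \<ge> 1" and "q \<ge> 1"
  shows "real ((p + q) choose q) * bernfun p (X + Y) * bernfun q Y =
    (\<Sum>j = 0..p + q. real ((p + q) choose j) * ibinom (int p + int q - 1 - int j) (q - 1)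
        * bernfun (p + q - j) Y * bernfun j X)
  + (\<Sum>h = 0..q. real ((p + q) choose h) * ibinom (int p + int q - 1 - int h) (p - 1)
        * (-1) ^ h * bernfun (p + q - h) (X + Y) * bernfun h X)"
proof -
  have "frac X = frac (X + Y) - frac Y \<or> frac X = frac (X + Y) - frac Y + 1"
    using frac_add[of X Y] by (auto split: if_splits)
  then show ?thesis
    unfolding bernfun_def frac_def[symmetric] by (rule bernpoly_product_identity[OF assms])
qed

end
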